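(* Let $A\in\mathbb{C}^{d\times d}$ be Hermitian positive-definite and let $M\in\mathbb{R}^{d\times d}$ be diagonal with positive diagonal entries. Let $\lambda_0>0$ be the smallest eigenvalue of the generalized eigenvalue problem $Az=\lambda Mz$. For $\lambda>0$ consider the energy $e:\mathbb{C}^d\to\mathbb{R}$, $$e(z)=\tfrac12\langle Az,z\rangle+\tfrac{\lambda}{4}\langle Mu,u\rangle,\qquad u_i=1-|z_i|^2\ (i=1,\dots,d),$$ where $\langle x,y\rangle=\mathrm{Re}\,(x^\dagger y)$. If $0<\lambda\le\lambda_0$, then the only critical point of $e$ (viewing $\mathbb{C}^d\cong\mathbb{R}^{2d}$) is $z=0$.
   Context: $x^\dagger$ denotes the conjugate transpose. Critical points are points where the gradient of $e$ with respect to the real and imaginary parts of $z$ vanishes. *)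

theory Defs
  imports "HOL-Analysis.Analysis"
begin

definition cinner :: "complex ^ 'n \<Rightarrow> complex ^ 'n \<Rightarrow> real" where
  "cinner x y = Re (\<Sum>i\<in>UNIV. cnj (x $ i) * y $ i)"

definition hermitian_mat :: "complex ^ 'n ^ 'n \<Rightarrow> bool" where
  "hermitian_mat A \<longleftrightarrow> (\<forall>i j. A $ i $ j = cnj (A $ j $ i))"

definition pos_def_herm :: "complex ^ 'n ^ 'n \<Rightarrow> bool" where
  "pos_def_herm A \<longleftrightarrow> hermitian_mat A \<and> (\<forall>z. z \<noteq> 0 \<longrightarrow> cinner (A *v z) z > 0)"

definition pos_diag_mat :: "real ^ 'n ^ 'n \<Rightarrow> bool" where
  "pos_diag_mat M \<longleftrightarrow> (\<forall>i j. i \<noteq> j \<longrightarrow> M $ i $ j = 0) \<and> (\<forall>i. M $ i $ i > 0)"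

definition gen_eigenvalue :: "complex ^ 'n ^ 'n \<Rightarrow> real ^ 'n ^ 'n \<Rightarrow> complex \<Rightarrow> bool" where
  "gen_eigenvalue A M mu \<longleftrightarrow>
     (\<exists>z. z \<noteq> 0 \<and> A *v z = mu *s ((\<chi> i j. complex_of_real (M $ i $ j)) *v z))"

definition energy :: "complex ^ 'n ^ 'n \<Rightarrow> real ^ 'n ^ 'n \<Rightarrow> real \<Rightarrow> complex ^ 'n \<Rightarrow> real" where
  "energy A M lam z =
     (let u = (\<chi> i. 1 - (cmod (z $ i))\<^sup>2) :: real ^ 'n
      in cinner (A *v z) z / 2 + lam / 4 * ((M *v u) \<bullet> u))"

text \<open>Critical point of a real-valued function on C^d viewed as R^(2d):
  the (Frechet) derivative w.r.t. real and imaginary parts vanishes.\<close>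
definition critical_point :: "(complex ^ 'n \<Rightarrow> real) \<Rightarrow> complex ^ 'n \<Rightarrow> bool" where
  "critical_point f z \<longleftrightarrow> (f has_derivative (\<lambda>h. 0)) (at z)"

end

theory Submission
  imports Defs
begin

(* Differentiating e at a critical point z in the direction z itself gives
   <Az,z> = lam * sum_i M_ii |z_i|^2 (1 - |z_i|^2).  The smallest generalized eigenvalue lam0 is
   the minimum of the Rayleigh quotient <Az,z> / <Mz,z>, since a minimiser of the quotient on the
   unit sphere is a generalized eigenvector.  Hence
   lam * sum_i M_ii |z_i|^4 <= (lam - lam0) * sum_i M_ii |z_i|^2 <= 0, which forces z = 0. *)

lemma quadratic_nonneg_imp_linear_coeff_zero:
  fixes b c :: real
  assumes nonneg: "\<And>t. 0 \<le> b * t + c * t\<^sup>2"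
  shows "b = 0"
proof -
  define d where "d = \<bar>c\<bar> + 1"
  have "d > 0" "c < d"
    unfolding d_def by linarith+
  have "b * (- b / d) + c * (- b / d)\<^sup>2 = b\<^sup>2 * (c - d) / d\<^sup>2"
    using \<open>d > 0\<close> by (simp add: field_simps power2_eq_square)
  with nonneg have "0 \<le> b\<^sup>2 * (c - d) / d\<^sup>2"
    by metis
  then have "0 \<le> b\<^sup>2 * (c - d)"
    using \<open>d > 0\<close> by (simp add: zero_le_divide_iff)
  moreover have "c - d < 0"
    using \<open>c < d\<close> by simp
  ultimately show "b = 0"
    by (auto simp: zero_le_mult_iff)
qed

lemma self_adjoint_nonneg_null_vector:
  fixes B :: "'a::real_inner \<Rightarrow> 'a"
  assumes "linear B" and self_adjoint: "\<And>x y. B x \<bullet> y = x \<bullet> B y"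
    and nonneg: "\<And>x. 0 \<le> B x \<bullet> x" and null: "B w \<bullet> w = 0"
  shows "B w = 0"
proof -
  have "2 * (B w \<bullet> h) = 0" for h
  proof (rule quadratic_nonneg_imp_linear_coeff_zero)
    fix t
    have "B (w + t *\<^sub>R h) \<bullet> (w + t *\<^sub>R h) = 2 * (B w \<bullet> h) * t + (B h \<bullet> h) * t\<^sup>2"
      using null self_adjoint[of h w]
      by (simp add: linear_add[OF \<open>linear B\<close>] linear_scale[OF \<open>linear B\<close>]
          inner_add_left inner_add_right inner_commute power2_eq_square algebra_simps)
    then show "0 \<le> 2 * (B w \<bullet> h) * t + (B h \<bullet> h) * t\<^sup>2"
      using nonneg by metis
  qed
  then show ?thesis
    using inner_eq_zero_iff[of "B w"] by simp
qed

lemma generalized_rayleigh_minimum: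
  fixes A B :: "'a::euclidean_space \<Rightarrow> 'a"
  assumes "linear A" "linear B"
    and A_self_adjoint: "\<And>x y. A x \<bullet> y = x \<bullet> A y"
    and B_self_adjoint: "\<And>x y. B x \<bullet> y = x \<bullet> B y"
    and B_pos: "\<And>x. x \<noteq> 0 \<Longrightarrow> 0 < B x \<bullet> x"
  obtains mu w where "w \<noteq> 0" "A w = mu *\<^sub>R B w" "\<And>x. mu * (B x \<bullet> x) \<le> A x \<bullet> x"
proof -
  define R where "R x = (A x \<bullet> x) / (B x \<bullet> x)" for x
  have "B x \<bullet> x \<noteq> 0" if "x \<in> sphere 0 1" for x
    using B_pos[of x] that by force
  then have "continuous_on (sphere 0 1) R"
    unfolding R_def using \<open>linear A\<close> \<open>linear B\<close>
    by (intro continuous_intros linear_continuous_on) (auto simp: linear_conv_bounded_linear)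
  moreover have "sphere (0::'a) 1 \<noteq> {}"
    by simp
  ultimately obtain w where w: "w \<in> sphere 0 1" and w_min: "\<forall>y\<in>sphere 0 1. R w \<le> R y"
    using continuous_attains_inf[OF compact_sphere] by blast
  define mu where "mu = R w"
  have R_scale: "R (c *\<^sub>R x) = R x" if "c \<noteq> 0" for c x
    unfolding R_def using that assms(1,2) by (simp add: linear_scale)
  have bound: "mu * (B x \<bullet> x) \<le> A x \<bullet> x" for x
  proof (cases "x = 0")
    case True
    then show ?thesis
      using \<open>linear A\<close> \<open>linear B\<close> by (simp add: linear_0)
  next
    case False
    then have "mu \<le> R x"
      using w_min[rule_format, of "inverse (norm x) *\<^sub>R x"] R_scale[of "inverse (norm x)" x]
      unfolding mu_def by simp
    then show ?thesis
      using B_pos[OF False] unfolding R_def by (simp add: pos_le_divide_eq)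
  qed
  have "w \<noteq> 0"
    using w by auto
  define C where "C = (\<lambda>x. A x - mu *\<^sub>R B x)"
  have "C w = 0"
  proof (rule self_adjoint_nonneg_null_vector[where B = C])
    show "linear C"
      unfolding C_def using \<open>linear A\<close> \<open>linear B\<close>
      by (intro linear_compose_sub linear_compose_scale_right)
    show "C x \<bullet> y = x \<bullet> C y" for x y
      unfolding C_def by (simp add: inner_diff_left inner_diff_right A_self_adjoint B_self_adjoint)
    show "0 \<le> C x \<bullet> x" for x
      unfolding C_def using bound[of x] by (simp add: inner_diff_left)
    show "C w \<bullet> w = 0"
      unfolding C_def mu_def R_def using B_pos[OF \<open>w \<noteq> 0\<close>] by (simp add: inner_diff_left)
  qed
  then have "A w = mu *\<^sub>R B w"
    unfolding C_def by simp
  with \<open>w \<noteq> 0\<close> bound show ?thesis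
    using that by blast
qed

lemma cinner_eq_inner: "cinner x y = x \<bullet> y"
  unfolding cinner_def inner_vec_def Re_sum by (simp add: inner_complex_def)

lemma hermitian_mat_inner_commute:
  assumes "hermitian_mat A"
  shows "(A *v x) \<bullet> y = x \<bullet> (A *v y)"
proof -
  have cnj_A: "cnj (A $ i $ j) = A $ j $ i" for i j
    using assms unfolding hermitian_mat_def by (metis complex_cnj_cnj)
  have "(\<Sum>i\<in>UNIV. cnj ((A *v x) $ i) * y $ i) =
      (\<Sum>i\<in>UNIV. \<Sum>j\<in>UNIV. A $ j $ i * cnj (x $ j) * y $ i)"
    unfolding matrix_vector_mult_def vec_lambda_beta cnj_sum sum_distrib_left sum_distrib_right
    by (simp add: cnj_A mult_ac)
  also have "\<dots> = (\<Sum>j\<in>UNIV. cnj (x $ j) * (A *v y) $ j)"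
    unfolding matrix_vector_mult_def vec_lambda_beta sum_distrib_left by (subst sum.swap) (simp add: mult_ac)
  finally show ?thesis
    using cinner_eq_inner unfolding cinner_def by metis
qed

lemma diagonal_mult_nth:
  fixes D :: "'a::semiring_1 ^ 'n ^ 'n"
  assumes "\<And>i j. i \<noteq> j \<Longrightarrow> D $ i $ j = 0"
  shows "(D *v u) $ i = D $ i $ i * u $ i"
  unfolding matrix_vector_mult_def using assms by (simp add: sum.remove[of UNIV i])

lemma pos_diag_mat_weighted_inner:
  assumes "pos_diag_mat M"
  shows "(map_matrix complex_of_real M *v z) \<bullet> z = (\<Sum>i\<in>UNIV. M $ i $ i * (cmod (z $ i))\<^sup>2)"
  using assms unfolding pos_diag_mat_def
  by (simp add: inner_vec_def diagonal_mult_nth scaleR_conv_of_real[symmetric] power2_norm_eq_inner)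

lemma pos_diag_mat_weighted_sum_nonneg:
  assumes "pos_diag_mat M" "\<And>i. 0 \<le> f i"
  shows "0 \<le> (\<Sum>i\<in>UNIV. M $ i $ i * f i)"
  using assms unfolding pos_diag_mat_def by (simp add: sum_nonneg less_imp_le)

lemma pos_diag_mat_weighted_sum_nonpos_imp_zero:
  assumes "pos_diag_mat M" "\<And>i. 0 \<le> f i" "(\<Sum>i\<in>UNIV. M $ i $ i * f i) \<le> 0"
  shows "f i = 0"
proof -
  have terms_nonneg: "\<forall>j\<in>UNIV. 0 \<le> M $ j $ j * f j"
    using assms(1,2) unfolding pos_diag_mat_def by (simp add: less_imp_le)
  with assms(3) have "(\<Sum>j\<in>UNIV. M $ j $ j * f j) = 0"
    by (meson antisym sum_nonneg)
  with terms_nonneg have "M $ i $ i * f i = 0"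
    by (simp add: sum_nonneg_eq_0_iff)
  then show ?thesis
    using assms(1) unfolding pos_diag_mat_def by (metis less_irrefl mult_eq_0_iff)
qed

lemma min_gen_eigenvalue_le_rayleigh:
  assumes "hermitian_mat A" "pos_diag_mat M"
    and lam0_min: "\<forall>mu::real. gen_eigenvalue A M (complex_of_real mu) \<longrightarrow> lam0 \<le> mu"
  shows "lam0 * (\<Sum>i\<in>UNIV. M $ i $ i * (cmod (z $ i))\<^sup>2) \<le> (A *v z) \<bullet> z"
proof -
  let ?M = "map_matrix complex_of_real M"
  have "hermitian_mat ?M"
    unfolding hermitian_mat_def
  proof (intro allI)
    show "?M $ i $ j = cnj (?M $ j $ i)" for i j
      using assms(2) unfolding pos_diag_mat_def by (cases "i = j") auto
  qed
  have M_pos: "0 < (?M *v x) \<bullet> x" if "x \<noteq> 0" for x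
  proof (rule ccontr)
    assume "\<not> 0 < (?M *v x) \<bullet> x"
    then have "(\<Sum>i\<in>UNIV. M $ i $ i * (cmod (x $ i))\<^sup>2) \<le> 0"
      by (simp add: pos_diag_mat_weighted_inner[OF assms(2)])
    from pos_diag_mat_weighted_sum_nonpos_imp_zero[OF assms(2) _ this]
    have "(cmod (x $ i))\<^sup>2 = 0" for i
      by simp
    with that show False
      by (simp add: vec_eq_iff)
  qed
  obtain mu w where "w \<noteq> 0" and eigen: "A *v w = mu *\<^sub>R (?M *v w)"
    and bound: "\<And>x. mu * ((?M *v x) \<bullet> x) \<le> (A *v x) \<bullet> x"
    using generalized_rayleigh_minimum[OF matrix_vector_mul_linear matrix_vector_mul_linear
        hermitian_mat_inner_commute[OF assms(1)]
        hermitian_mat_inner_commute[OF \<open>hermitian_mat ?M\<close>] M_pos]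
    by blast
  from eigen have "A *v w = complex_of_real mu *s (?M *v w)"
    by (simp add: vec_eq_iff scaleR_conv_of_real[where 'a = complex])
  with \<open>w \<noteq> 0\<close> have "gen_eigenvalue A M (complex_of_real mu)"
    unfolding gen_eigenvalue_def map_matrix_def by blast
  then have "lam0 \<le> mu"
    using lam0_min by blast
  moreover have "0 \<le> (?M *v z) \<bullet> z"
    using M_pos[of z] by (cases "z = 0") auto
  ultimately have "lam0 * ((?M *v z) \<bullet> z) \<le> mu * ((?M *v z) \<bullet> z)"
    by (rule mult_right_mono)
  also have "\<dots> \<le> (A *v z) \<bullet> z"
    by (rule bound)
  finally show ?thesis
    by (simp add: pos_diag_mat_weighted_inner[OF assms(2)])
qed

lemma energy_altdef:
  assumes "pos_diag_mat M"
  shows "energy A M lam =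
    (\<lambda>z. (A *v z) \<bullet> z / 2 + lam / 4 * (\<Sum>i\<in>UNIV. M $ i $ i * (1 - z $ i \<bullet> z $ i)\<^sup>2))"
proof -
  have "(M *v u) \<bullet> u = (\<Sum>i\<in>UNIV. M $ i $ i * (u $ i)\<^sup>2)" for u
    using assms unfolding pos_diag_mat_def
    by (simp add: inner_vec_def diagonal_mult_nth power2_eq_square mult.assoc)
  then show ?thesis
    unfolding energy_def Let_def cinner_eq_inner power2_norm_eq_inner by simp
qed

lemma energy_has_derivative:
  assumes "hermitian_mat A" "pos_diag_mat M"
  shows "(energy A M lam has_derivative
           (\<lambda>h. (A *v z) \<bullet> h - lam * (\<Sum>i\<in>UNIV. M $ i $ i * (1 - z $ i \<bullet> z $ i) * (z $ i \<bullet> h $ i))))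
         (at z)"
proof -
  have "(energy A M lam has_derivative (\<lambda>h. ((A *v z) \<bullet> h + (A *v h) \<bullet> z) / 2 +
      lam * (\<Sum>i\<in>UNIV. M $ i $ i *
        ((- (2 * (z $ i \<bullet> h $ i)) - 2 * (h $ i \<bullet> z $ i)) * (1 - z $ i \<bullet> z $ i))) / 4))
    (at z)"
    unfolding energy_altdef[OF assms(2)]
    by (rule derivative_eq_intros bounded_linear.has_derivative[OF bounded_linear_vec_nth]
        bounded_linear.has_derivative[OF matrix_vector_mul_bounded_linear] | simp)+
  moreover have "(A *v h) \<bullet> z = (A *v z) \<bullet> h" for h
    using hermitian_mat_inner_commute[OF assms(1), of h z] by (simp add: inner_commute)
  ultimately show ?thesis
    by (elim has_derivative_eq_rhs)
      (simp add: fun_eq_iff inner_commute sum_divide_distrib sum_distrib_left diff_divide_distrib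
        algebra_simps flip: sum_negf sum.distrib)
qed

lemma energy_critical_point_inner_eq:
  assumes "hermitian_mat A" "pos_diag_mat M" "critical_point (energy A M lam) z"
  shows "(A *v z) \<bullet> z =
    lam * (\<Sum>i\<in>UNIV. M $ i $ i * (1 - (cmod (z $ i))\<^sup>2) * (cmod (z $ i))\<^sup>2)"
proof -
  have "(\<lambda>h. (A *v z) \<bullet> h - lam * (\<Sum>i\<in>UNIV. M $ i $ i * (1 - z $ i \<bullet> z $ i) * (z $ i \<bullet> h $ i)))
      = (\<lambda>h. 0)"
    using assms(3) unfolding critical_point_def
    by (rule has_derivative_unique[OF energy_has_derivative[OF assms(1,2)]])
  from fun_cong[OF this, of z] show ?thesis
    by (simp add: power2_norm_eq_inner)
qed

lemma energy_critical_point_0: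
  assumes "hermitian_mat A" "pos_diag_mat M"
  shows "critical_point (energy A M lam) 0"
  using energy_has_derivative[OF assms, of lam 0] unfolding critical_point_def by simp

theorem lemmaC1:
  fixes A :: "complex ^ 'n ^ 'n" and M :: "real ^ 'n ^ 'n"
    and lam0 lam :: real and z :: "complex ^ 'n"
  assumes "pos_def_herm A"
    and "pos_diag_mat M"
    and "lam0 > 0"
    and "gen_eigenvalue A M (complex_of_real lam0)"
    and "\<forall>mu::real. gen_eigenvalue A M (complex_of_real mu) \<longrightarrow> lam0 \<le> mu"
    and "0 < lam" and "lam \<le> lam0"
  shows "critical_point (energy A M lam) z \<longleftrightarrow> z = 0"
proof -
  have A: "hermitian_mat A"
    using assms(1) unfolding pos_def_herm_def by simp
  have "z = 0" if "critical_point (energy A M lam) z"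
  proof -
    define m where "m i = M $ i $ i" for i
    define p where "p i = (cmod (z $ i))\<^sup>2" for i
    have "(A *v z) \<bullet> z = lam * (\<Sum>i\<in>UNIV. m i * p i) - lam * (\<Sum>i\<in>UNIV. m i * (p i)\<^sup>2)"
      using energy_critical_point_inner_eq[OF A assms(2) that] unfolding m_def p_def
      by (simp add: sum_subtractf power2_eq_square algebra_simps flip: sum_distrib_left)
    moreover have "lam0 * (\<Sum>i\<in>UNIV. m i * p i) \<le> (A *v z) \<bullet> z"
      using min_gen_eigenvalue_le_rayleigh[OF A assms(2,5)] unfolding m_def p_def .
    moreover have "lam * (\<Sum>i\<in>UNIV. m i * p i) \<le> lam0 * (\<Sum>i\<in>UNIV. m i * p i)"
      using pos_diag_mat_weighted_sum_nonneg[OF assms(2)] assms(7) unfolding m_def p_def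
      by (simp add: mult_right_mono)
    ultimately have "lam * (\<Sum>i\<in>UNIV. m i * (p i)\<^sup>2) \<le> 0"
      by linarith
    then have "(\<Sum>i\<in>UNIV. M $ i $ i * (p i)\<^sup>2) \<le> 0"
      using assms(6) unfolding m_def by (simp add: mult_le_0_iff)
    from pos_diag_mat_weighted_sum_nonpos_imp_zero[OF assms(2) _ this]
    have "(p i)\<^sup>2 = 0" for i
      by simp
    then show "z = 0"
      unfolding p_def by (simp add: vec_eq_iff)
  qed
  then show ?thesis
    using energy_critical_point_0[OF A assms(2)] by blast
qed

end
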